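(* For $n\in\{0,1,2,\dots\}$ and $x\in(-1,1)$ let $e_n(x)=\mathrm{e}\bigl(1+\sum_{k=1}^n(-1)^k f_k x^k\bigr)$. Then: (i) if $x\in(0,1)$, then for every $k\ge1$, $$e_1(x)<e_3(x)<\dots<e_{2k-1}(x)<e_{2k+1}(x)<\dots<e(x)<\dots<e_{2k+2}(x)<e_{2k}(x)<\dots<e_2(x)<e_0(x),$$ i.e. the odd-indexed $e_{2k-1}(x)$ strictly increase and are all $<e(x)$, the even-indexed $e_{2k}(x)$ strictly decrease and are all $>e(x)$; (ii) if $x\in(-1,0)$, then $e_0(x)<e_1(x)<e_2(x)<\dots<e_n(x)<e_{n+1}(x)<\dots<e(x)$, i.e. $e_n(x)$ is strictly increasing in $n$ and $e_n(x)<e(x)$ for all $n$; (iii) $e_n(0)=e(0)=\mathrm{e}$ for all $n\ge0$.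
   Context: Let $e(x)=(1+x)^{1/x}$ for $x>-1$, $x\neq 0$, and $e(0)=\mathrm{e}$. For $x\in(-1,1)$, $e(x)=\mathrm{e}\bigl(1+\sum_{k=1}^\infty e_k x^k\bigr)$, with $e_0=1$; equivalently $e_k=\mathrm{e}^{-1}\sum_{i=1}^\infty \frac{S_1(k+i,i)}{(k+i)!}$ for $k\ge1$, where $S_1(p,q)$ are the signed Stirling numbers of the first kind (sign $(-1)^{p-q}$). Define $f_k=(-1)^k e_k$, so that $e(x)=\mathrm{e}\bigl(1+\sum_{k\ge1}(-1)^kf_kx^k\bigr)$. *)

theory Defs
  imports "HOL-Analysis.Analysis" "HOL-Combinatorics.Stirling"
begin

definition efun :: "real \<Rightarrow> real" where
  "efun x = (if x = 0 then exp 1 else (1 + x) powr (1 / x))"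

definition S1 :: "nat \<Rightarrow> nat \<Rightarrow> real" where
  "S1 p q = (-1) ^ (p - q) * real (stirling p q)"

definition ecoef :: "nat \<Rightarrow> real" where
  "ecoef k = (if k = 0 then 1
     else exp (-1) * (\<Sum>i. S1 (k + Suc i) (Suc i) / fact (k + Suc i)))"

definition fcoef :: "nat \<Rightarrow> real" where
  "fcoef k = (-1) ^ k * ecoef k"

definition epart :: "nat \<Rightarrow> real \<Rightarrow> real" where
  "epart n x = exp 1 * (1 + (\<Sum>k=1..n. (-1) ^ k * fcoef k * x ^ k))"

end

theory Submission
  imports Defs
begin

text \<open>
  By the generalised binomial theorem, \<open>(1 + x) powr (1/x) = (\<Sum>n. (1/x gchoose n) * x^n)\<close>;
  expanding \<open>(1/x gchoose n) * x^n\<close> in Stirling numbers of the first kind gives an absolutely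
  convergent double series whose columns are the terms \<open>e * e_k * x^k\<close>. Hence
  \<open>H(t) = e(-t)/e = (\<Sum>k. f_k * t^k)\<close>, and also \<open>H = exp L\<close> with
  \<open>L(t) = -ln(1 - t)/t - 1 = (\<Sum>m\<ge>1. t^m/(m+1))\<close>. The equation \<open>H' = H * L'\<close> is a recursion
  with positive coefficients, so \<open>f_k > 0\<close>. The series \<open>Q = (1 - t) * H\<close>, whose coefficients
  are \<open>f_k - f_(k-1)\<close>, satisfies \<open>Q' = - Q * B\<close> with \<open>B(t) = (\<Sum>m. t^m/(m+2))\<close>; combining this
  recursion at two consecutive indices shows inductively that those coefficients are
  negative, i.e. \<open>f_k\<close> is strictly decreasing. So for \<open>0 < x < 1\<close> the series
  \<open>e(x) = e * (\<Sum>k. (-1)^k * f_k * x^k)\<close> alternates with strictly decreasing terms, while for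
  \<open>-1 < x < 0\<close> all its terms are positive.
\<close>

section \<open>The power series of \<open>e(x)\<close>\<close>

lemma stirling_row_gbinomial:
  fixes x :: real
  assumes "x \<noteq> 0"
  shows "(\<Sum>i\<le>n. S1 n i * x^(n-i) / fact n) = ((1/x) gchoose n) * x^n"
proof -
  have sign: "(-1)^n * (-(1/x))^i * x^n = (-1)^(n-i) * x^(n-i)" if "i \<le> n" for i
  proof -
    obtain d where n: "n = i + d" using \<open>i \<le> n\<close> le_Suc_ex by blast
    have "(-1)^n * (-(1/x))^i * x^n = ((-1)^i * (-1)^i) * ((1/x)^i * x^i) * ((-1)^d * x^d)"
      unfolding n power_add power_minus[of "1/x"] by (simp only: mult_ac)
    also have "\<dots> = (-1)^d * x^d" using assms by (simp flip: power_mult_distrib)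
    finally show ?thesis using n by simp
  qed
  have "((1/x) gchoose n) * x^n = (-1)^n * pochhammer (-(1/x)) n / fact n * x^n"
    by (simp add: gbinomial_pochhammer)
  also have "\<dots> = (\<Sum>i\<le>n. real (stirling n i) * ((-1)^n * (-(1/x))^i * x^n) / fact n)"
    by (simp add: stirling_pochhammer [symmetric] sum_distrib_left sum_distrib_right
        sum_divide_distrib algebra_simps)
  also have "\<dots> = (\<Sum>i\<le>n. S1 n i * x^(n-i) / fact n)"
    by (intro sum.cong refl) (simp add: sign S1_def)
  finally show ?thesis ..
qed

lemma abs_S1_mult_power:
  fixes x :: real
  assumes "k = n - i"
  shows "\<bar>S1 n i * x^k\<bar> = S1 n i * (- \<bar>x\<bar>)^k"
proof -
  have "S1 n i * (- \<bar>x\<bar>)^k = real (stirling n i) * ((-1)^k * (-1)^k) * \<bar>x\<bar>^k"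
    unfolding S1_def assms power_minus[of "\<bar>x\<bar>"] by (simp only: mult_ac)
  also have "\<dots> = \<bar>S1 n i * x^k\<bar>"
    by (simp add: S1_def abs_mult power_abs flip: power_mult_distrib)
  finally show ?thesis ..
qed

lemma binomial_stirling_has_sum:
  fixes x :: real
  assumes "\<bar>x\<bar> < 1" "x \<noteq> 0"
  shows "((\<lambda>(n, i). S1 n i * x^(n-i) / fact n) has_sum (1 + x) powr (1/x)) (SIGMA n:UNIV. {..n})"
proof -
  define g where "g y = (\<lambda>(n, i). S1 n i * y^(n-i) / fact n :: real)" for y
  have rows: "((\<lambda>i. g y (n, i)) has_sum ((1/y) gchoose n) * y^n) {..n}" if "y \<noteq> 0" for y n
    using has_sum_finite[of "{..n}" "\<lambda>i. g y (n, i)"] stirling_row_gbinomial[OF that, of n]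
    by (simp add: g_def)
  \<comment> \<open>For \<open>y = -\<bar>x\<bar>\<close> all terms are nonnegative and dominate those for \<open>x\<close>.\<close>
  define y where "y = - \<bar>x\<bar>"
  have y: "\<bar>y\<bar> < 1" "y \<noteq> 0" using assms by (auto simp: y_def)
  have g_abs: "\<bar>g x p\<bar> = g y p" for p
  proof (cases p)
    case (Pair n i)
    have "\<bar>S1 n i * x^(n-i) / fact n\<bar> = \<bar>S1 n i * x^(n-i)\<bar> / fact n"
      by (simp add: abs_divide)
    then show ?thesis
      using abs_S1_mult_power[of "n - i" n i x] by (simp add: g_def y_def Pair)
  qed
  have "g y summable_on (SIGMA n:UNIV. {..n})"
  proof (rule summable_on_SigmaI[OF rows[OF y(2)]])
    have "(\<lambda>n. ((1/y) gchoose n) * y^n) sums (1 + y) powr (1/y)"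
      by (rule gen_binomial_real) (use y in simp)
    moreover have "0 \<le> ((1/y) gchoose n) * y^n" for n
      using has_sum_nonneg[OF rows[OF y(2)], of n] g_abs by (metis abs_ge_zero)
    ultimately show "(\<lambda>n. ((1/y) gchoose n) * y^n) summable_on UNIV"
      by (blast intro: has_sum_imp_summable sums_nonneg_imp_has_sum)
    show "0 \<le> g y (n, i)" for n i
      using g_abs[of "(n, i)"] by linarith
  qed
  then have "g x summable_on (SIGMA n:UNIV. {..n})"
  proof -
    have "(\<lambda>p. norm (g x p)) summable_on (SIGMA n:UNIV. {..n})"
      using \<open>g y summable_on _\<close> by (simp add: g_abs)
    then show ?thesis by (rule abs_summable_summable)
  qed
  then have "((\<lambda>n. ((1/x) gchoose n) * x^n) has_sum infsum (g x) (SIGMA n:UNIV. {..n})) UNIV"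
    using has_sum_SigmaD[OF has_sum_infsum rows[OF assms(2)]] by blast
  then have "infsum (g x) (SIGMA n:UNIV. {..n}) = (1 + x) powr (1/x)"
    using sums_unique2 has_sum_imp_sums gen_binomial_real[OF assms(1)] by blast
  with \<open>g x summable_on _\<close> show ?thesis
    using has_sum_infsum g_def by fastforce
qed

lemma stirling_double_series_has_sum:
  fixes x :: real
  assumes "\<bar>x\<bar> < 1" "x \<noteq> 0"
  shows "((\<lambda>(k, i). S1 (k + i) i * x^k / fact (k + i)) has_sum (1 + x) powr (1/x)) UNIV"
proof -
  have "bij_betw (\<lambda>(k, i). (k + i, i)) UNIV (SIGMA n:UNIV. {..n::nat})"
    by (rule bij_betw_byWitness[where f' = "\<lambda>(n, i). (n - i, i)"]) auto
  from has_sum_reindex_bij_betw[OF this, where f = "\<lambda>(n, i). S1 n i * x^(n-i) / fact n"]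
  show ?thesis
    using binomial_stirling_has_sum[OF assms] by (simp add: case_prod_unfold)
qed

lemma stirling_column_has_sum:
  "((\<lambda>i. S1 (k + i) i / fact (k + i)) has_sum exp 1 * ecoef k) UNIV"
proof -
  define a where "a = (\<lambda>i. S1 (k + i) i / fact (k + i))"
  \<comment> \<open>Column summability is read off the double series at \<open>x = 1/2\<close>.\<close>
  have "(\<lambda>(k, i). S1 (k + i) i * (1/2::real)^k / fact (k + i)) summable_on UNIV \<times> UNIV"
    using stirling_double_series_has_sum[of "1/2"] by (auto intro: has_sum_imp_summable)
  then have "(\<lambda>i. S1 (k + i) i * (1/2::real)^k / fact (k + i)) summable_on UNIV"
    by (rule summable_on_SigmaD1) simp
  then have "(\<lambda>i. 2^k * (S1 (k + i) i * (1/2::real)^k / fact (k + i))) summable_on UNIV"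
    by (rule summable_on_cmult_right)
  then have "a summable_on UNIV"
    by (simp add: a_def power_one_over)
  then have a_sums: "a sums infsum a UNIV"
    by (intro has_sum_imp_sums has_sum_infsum)
  \<comment> \<open>\<open>ecoef\<close> sums from \<open>i = 1\<close>; the term \<open>i = 0\<close> vanishes unless \<open>k = 0\<close>.\<close>
  have "infsum a UNIV = exp 1 * ecoef k"
  proof (cases "k = 0")
    case True
    then have "a = (\<lambda>i. 1^i /\<^sub>R fact i)"
      by (auto simp: a_def S1_def divide_inverse)
    then have "a sums exp 1"
      by (simp only: exp_converges)
    with a_sums True show ?thesis
      by (simp add: ecoef_def sums_unique2)
  next
    case False
    then have "(\<lambda>i. a (Suc i)) sums infsum a UNIV"
      using a_sums sums_Suc_iff[of a] by (simp add: a_def S1_def)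
    with False show ?thesis
      by (simp add: a_def ecoef_def sums_iff exp_minus)
  qed
  with \<open>a summable_on UNIV\<close> show ?thesis
    unfolding a_def by (metis has_sum_infsum)
qed

lemma efun_sums:
  fixes x :: real
  assumes "\<bar>x\<bar> < 1"
  shows "(\<lambda>k. exp 1 * ecoef k * x^k) sums efun x"
proof (cases "x = 0")
  case True
  then show ?thesis
    using powser_sums_zero[of "\<lambda>k. exp 1 * ecoef k"] by (simp add: efun_def ecoef_def)
next
  case False
  have "((\<lambda>i. S1 (k + i) i * x^k / fact (k + i)) has_sum exp 1 * ecoef k * x^k) UNIV" for k
    using has_sum_cmult_right[OF stirling_column_has_sum, of "x^k" k] by (simp add: field_simps)
  with has_sum_SigmaD[where A = UNIV and B = "\<lambda>_. UNIV"
      and f = "\<lambda>(k, i). S1 (k + i) i * x^k / fact (k + i)"]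
    stirling_double_series_has_sum[OF assms False]
  have "((\<lambda>k. exp 1 * ecoef k * x^k) has_sum (1 + x) powr (1/x)) UNIV"
    by (simp add: case_prod_unfold)
  with False show ?thesis
    by (simp add: efun_def has_sum_imp_sums)
qed

section \<open>Real power series\<close>

lemma fps_conv_radius_ge_1:
  fixes F :: "real fps"
  assumes "\<And>t. \<bar>t\<bar> < 1 \<Longrightarrow> summable (\<lambda>n. fps_nth F n * t^n)"
  shows "fps_conv_radius F \<ge> 1"
  unfolding fps_conv_radius_def
  by (rule conv_radius_geI_ex') (use assms in \<open>auto simp: one_ereal_def\<close>)

lemma eval_fps_eq_0_imp_eq_0:
  fixes F :: "real fps"
  assumes "fps_conv_radius F > 0" "eventually (\<lambda>t. eval_fps F t = 0) (nhds 0)"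
  shows "F = 0"
proof (rule ccontr)
  assume "F \<noteq> 0"
  define n where "n = subdegree F"
  define g where "g = eval_fps (fps_shift n F)"
  have "isCont g 0"
    unfolding g_def by (rule continuous_eval_fps) (use assms(1) in \<open>simp add: zero_ereal_def\<close>)
  have "eventually (\<lambda>t. t \<in> eball 0 (fps_conv_radius F)) (nhds (0::real))"
    using assms(1) by (intro eventually_nhds_in_open) (auto simp: zero_ereal_def)
  with assms(2) have "eventually (\<lambda>t. g t = 0) (at 0)"
    unfolding eventually_at_filter
    by eventually_elim (auto simp: g_def n_def eval_fps_shift)
  then have "(g \<longlongrightarrow> 0) (at 0)"
    by (rule tendsto_eventually)
  with \<open>isCont g 0\<close> have "g 0 = 0"
    by (metis isCont_def tendsto_unique at_neq_bot)
  moreover have "g 0 = fps_nth F n"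
    by (simp add: g_def eval_fps_at_0)
  ultimately show False
    using \<open>F \<noteq> 0\<close> by (simp add: n_def)
qed

lemma eval_fps_eqD_real:
  fixes F G :: "real fps"
  assumes "fps_conv_radius F > 0" "fps_conv_radius G > 0"
    and "eventually (\<lambda>t. eval_fps F t = eval_fps G t) (nhds 0)"
  shows "F = G"
proof -
  have "fps_conv_radius (F - G) > 0"
    using assms(1,2) by (intro less_le_trans[OF _ fps_conv_radius_diff]) simp
  moreover have "eventually (\<lambda>t. t \<in> eball 0 (min (fps_conv_radius F) (fps_conv_radius G))) (nhds (0::real))"
    using assms(1,2) by (intro eventually_nhds_in_open) (auto simp: zero_ereal_def)
  with assms(3) have "eventually (\<lambda>t. eval_fps (F - G) t = 0) (nhds 0)"
    by eventually_elim (simp add: eval_fps_diff)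
  ultimately have "F - G = 0"
    by (rule eval_fps_eq_0_imp_eq_0)
  then show ?thesis
    by simp
qed

section \<open>The generating function of the \<open>f_k\<close>\<close>

lemma fcoef_0: "fcoef 0 = 1"
  by (simp add: fcoef_def ecoef_def)

lemma fcoef_sums:
  fixes t :: real
  assumes "\<bar>t\<bar> < 1"
  shows "(\<lambda>k. fcoef k * t^k) sums (efun (-t) / exp 1)"
proof -
  have "(\<lambda>k. exp 1 * ecoef k * (-t)^k / exp 1) sums (efun (-t) / exp 1)"
    using efun_sums[of "-t"] assms by (intro sums_divide) simp
  then show ?thesis
    by (simp add: fcoef_def power_minus[of t] mult_ac)
qed

definition fps_f :: "real fps" where
  "fps_f = Abs_fps fcoef"

definition fps_L :: "real fps" where
  "fps_L = Abs_fps (\<lambda>m. if m = 0 then 0 else 1 / (real m + 1))"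

lemma fps_L_sums:
  fixes t :: real
  assumes "\<bar>t\<bar> < 1" "t \<noteq> 0"
  shows "(\<lambda>m. fps_nth fps_L m * t^m) sums (- ln (1 - t) / t - 1)"
proof -
  have "(\<lambda>n. - ((-(-t))^n) / of_nat n) sums ln (1 + -t)"
    by (rule ln_series') (use assms in simp)
  then have "(\<lambda>n. t^n / of_nat n) sums (- ln (1 - t))"
    using sums_minus by fastforce
  then have "(\<lambda>n. t^(Suc n) / of_nat (Suc n)) sums (- ln (1 - t))"
    by (subst sums_Suc_iff) simp
  then have "(\<lambda>n. t^(Suc n) / of_nat (Suc n) / t) sums (- ln (1 - t) / t)"
    by (rule sums_divide)
  moreover have "t^(Suc n) / of_nat (Suc n) / t = t^n / (real n + 1)" for n
  proof -
    have "t^(Suc n) / of_nat (Suc n) / t = (t^(Suc n) / t) / of_nat (Suc n)"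
      by (simp only: divide_divide_eq_left mult.commute)
    also have "t^(Suc n) / t = t^n"
      using assms(2) by simp
    finally show ?thesis
      by simp
  qed
  ultimately have "(\<lambda>n. t^n / (real n + 1) - (if n = 0 then 1 else 0)) sums (- ln (1 - t) / t - 1)"
    using sums_single[of 0 "\<lambda>_. 1::real"] by (intro sums_diff) simp_all
  moreover have "(\<lambda>m. fps_nth fps_L m * t^m) = (\<lambda>n. t^n / (real n + 1) - (if n = 0 then 1 else 0))"
    by (auto simp: fps_L_def fun_eq_iff)
  ultimately show ?thesis
    by simp
qed

lemma fps_conv_radius_fps_f: "fps_conv_radius fps_f \<ge> 1"
  by (rule fps_conv_radius_ge_1) (auto simp: fps_f_def dest: fcoef_sums sums_summable)

lemma fps_conv_radius_fps_L: "fps_conv_radius fps_L \<ge> 1"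
proof (rule fps_conv_radius_ge_1)
  fix t :: real
  assume "\<bar>t\<bar> < 1"
  then show "summable (\<lambda>n. fps_nth fps_L n * t^n)"
    using fps_L_sums[of t] by (cases "t = 0") (auto simp: sums_iff)
qed

lemma eval_fps_f:
  fixes t :: real
  assumes "\<bar>t\<bar> < 1"
  shows "eval_fps fps_f t = exp (eval_fps fps_L t)"
proof (cases "t = 0")
  case True
  then show ?thesis
    by (simp add: eval_fps_at_0 fps_f_def fps_L_def fcoef_def ecoef_def)
next
  case False
  have "eval_fps fps_f t = efun (-t) / exp 1"
    using fcoef_sums[OF assms] by (simp add: eval_fps_def fps_f_def sums_iff)
  also have "efun (-t) = exp (- ln (1 - t) / t)"
    using assms False by (simp add: efun_def powr_def)
  also have "\<dots> / exp 1 = exp (- ln (1 - t) / t - 1)"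
    by (simp add: exp_diff)
  also have "- ln (1 - t) / t - 1 = eval_fps fps_L t"
    using fps_L_sums[OF assms False] by (simp add: eval_fps_def sums_iff)
  finally show ?thesis .
qed

lemma norm_less_fps_conv_radius:
  fixes F :: "real fps" and t :: real
  assumes "\<bar>t\<bar> < 1" "fps_conv_radius F \<ge> 1"
  shows "ereal (norm t) < fps_conv_radius F"
  using assms by (intro less_le_trans[OF _ assms(2)]) (simp add: one_ereal_def)

lemma eval_fps_f_has_field_derivative:
  fixes t :: real
  assumes "\<bar>t\<bar> < 1"
  shows "(eval_fps fps_f has_field_derivative eval_fps fps_f t * eval_fps (fps_deriv fps_L) t) (at t)"
proof -
  have "((\<lambda>t. exp (eval_fps fps_L t)) has_field_derivative
      exp (eval_fps fps_L t) * eval_fps (fps_deriv fps_L) t) (at t)"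
    by (rule DERIV_chain2[OF DERIV_exp has_field_derivative_eval_fps])
       (rule norm_less_fps_conv_radius[OF assms fps_conv_radius_fps_L])
  then have "(eval_fps fps_f has_field_derivative
      exp (eval_fps fps_L t) * eval_fps (fps_deriv fps_L) t) (at t)"
    by (rule has_field_derivative_transform_within_open[where S = "ball 0 1"])
       (use assms eval_fps_f in auto)
  then show ?thesis
    by (simp add: eval_fps_f[OF assms])
qed

lemma fps_deriv_fps_f: "fps_deriv fps_f = fps_f * fps_deriv fps_L"
proof (rule eval_fps_eqD_real)
  have f': "fps_conv_radius (fps_deriv fps_f) \<ge> 1"
    using fps_conv_radius_fps_f fps_conv_radius_deriv[of fps_f] by (rule order.trans)
  have L': "fps_conv_radius (fps_deriv fps_L) \<ge> 1"
    using fps_conv_radius_fps_L fps_conv_radius_deriv[of fps_L] by (rule order.trans)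
  have fL': "fps_conv_radius (fps_f * fps_deriv fps_L) \<ge> 1"
    using fps_conv_radius_fps_f L' by (intro order.trans[OF _ fps_conv_radius_mult]) simp
  from f' fL' show "fps_conv_radius (fps_deriv fps_f) > 0" "fps_conv_radius (fps_f * fps_deriv fps_L) > 0"
    by (auto intro: less_le_trans[of _ 1])
  have "eventually (\<lambda>t. t \<in> ball 0 1) (nhds (0::real))"
    by (intro eventually_nhds_in_open) auto
  then show "eventually (\<lambda>t. eval_fps (fps_deriv fps_f) t = eval_fps (fps_f * fps_deriv fps_L) t) (nhds 0)"
  proof eventually_elim
    case (elim t)
    then have t: "\<bar>t\<bar> < 1"
      by simp
    have "eval_fps (fps_deriv fps_f) t = eval_fps fps_f t * eval_fps (fps_deriv fps_L) t"
      using has_field_derivative_eval_fps[OF norm_less_fps_conv_radius[OF t fps_conv_radius_fps_f]]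
        eval_fps_f_has_field_derivative[OF t] by (rule DERIV_unique)
    also have "\<dots> = eval_fps (fps_f * fps_deriv fps_L) t"
      using norm_less_fps_conv_radius[OF t fps_conv_radius_fps_f] norm_less_fps_conv_radius[OF t L']
      by (rule eval_fps_mult [symmetric])
    finally show ?case .
  qed
qed

lemma fcoef_Suc:
  "real (Suc n) * fcoef (Suc n) = (\<Sum>i\<le>n. fcoef i * ((real (n - i) + 1) / (real (n - i) + 2)))"
proof -
  have "fps_nth (fps_deriv fps_f) n = fps_nth (fps_f * fps_deriv fps_L) n"
    by (simp only: fps_deriv_fps_f)
  then show ?thesis
    by (simp add: fps_mult_nth fps_f_def fps_L_def atLeast0AtMost add.commute)
qed

lemma fcoef_pos: "fcoef n > 0"
proof (induction n rule: less_induct)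
  case (less n)
  show ?case
  proof (cases n)
    case 0
    then show ?thesis by (simp add: fcoef_0)
  next
    case (Suc p)
    have "0 < (\<Sum>i\<le>p. fcoef i * ((real (p - i) + 1) / (real (p - i) + 2)))"
    proof (rule sum_pos2[of _ 0])
      fix i
      assume "i \<in> {..p}"
      with less Suc have "fcoef i > 0"
        by simp
      then show "0 \<le> fcoef i * ((real (p - i) + 1) / (real (p - i) + 2))"
        by simp
    qed (simp_all add: fcoef_0)
    then have "0 < real (Suc p) * fcoef (Suc p)"
      by (simp only: fcoef_Suc)
    then show ?thesis
      using Suc by (simp add: zero_less_mult_iff)
  qed
qed

section \<open>Monotonicity of the \<open>f_k\<close>\<close>

lemma recurrence_kernel_diff:
  fixes M j :: real
  assumes "0 \<le> j" "j \<le> M"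
  shows "(M + 1) / (M + 2) / (M - j + 1) - 1 / (M - j + 2) = j / ((M + 2) * (M - j + 1) * (M - j + 2))"
proof -
  have "M + 2 \<noteq> 0" "M - j + 1 \<noteq> 0" "M - j + 2 \<noteq> 0"
    using assms by linarith+
  then have "(M + 1) / (M + 2) / (M - j + 1) - 1 / (M - j + 2) =
      ((M + 1) * (M - j + 2) - (M + 2) * (M - j + 1)) / ((M + 2) * (M - j + 1) * (M - j + 2))"
    by (simp add: divide_divide_eq_left diff_frac_eq)
  also have "(M + 1) * (M - j + 2) - (M + 2) * (M - j + 1) = j"
    by (simp add: algebra_simps)
  finally show ?thesis .
qed

text \<open>
  The recursion at \<open>m\<close> minus \<open>(m+1)/(m+2)\<close> times the recursion at \<open>m - 1\<close>: the kernel that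
  remains vanishes at \<open>i = 0\<close> and is nonnegative, which drives the induction below.
\<close>
lemma recurrence_step_eq:
  fixes q :: "nat \<Rightarrow> real"
  assumes rec: "\<And>n. real (Suc n) * q (Suc n) = - (\<Sum>i\<le>n. q i / (real n - real i + 2))"
    and "m \<ge> 1"
  shows "real (Suc m) * q (Suc m) =
    (\<Sum>i<m. q i * (real i / ((real m + 2) * (real m - real i + 1) * (real m - real i + 2))))
    + ((real m + 1) * real m / (real m + 2) - 1 / 2) * q m"
proof -
  obtain p where m: "m = Suc p"
    using \<open>m \<ge> 1\<close> by (cases m) auto
  define S where "S = (\<Sum>i<m. q i / (real m - real i + 1))"
  define T where "T = (\<Sum>i<m. q i / (real m - real i + 2))"
  have prev: "S = - (real m * q m)"
    using rec[of p] unfolding S_def m by (simp flip: lessThan_Suc_atMost) (simp add: algebra_simps)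
  have cur: "real (Suc m) * q (Suc m) = - T - q m / 2"
    using rec[of m] unfolding T_def by (simp flip: lessThan_Suc_atMost)
  have "(\<Sum>i<m. q i * (real i / ((real m + 2) * (real m - real i + 1) * (real m - real i + 2)))) =
      (\<Sum>i<m. (real m + 1) / (real m + 2) * (q i / (real m - real i + 1)) - q i / (real m - real i + 2))"
  proof (rule sum.cong)
    fix i
    assume "i \<in> {..<m}"
    then have "real i \<le> real m"
      by simp
    then show "q i * (real i / ((real m + 2) * (real m - real i + 1) * (real m - real i + 2))) =
        (real m + 1) / (real m + 2) * (q i / (real m - real i + 1)) - q i / (real m - real i + 2)"
      by (simp add: recurrence_kernel_diff [symmetric] right_diff_distrib)
  qed simp
  also have "\<dots> = (real m + 1) / (real m + 2) * S - T"
    unfolding S_def T_def by (simp add: sum_subtractf sum_distrib_left)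
  also have "\<dots> = - ((real m + 1) * real m / (real m + 2) * q m) - T"
    by (simp add: prev)
  finally show ?thesis
    using cur by (simp add: algebra_simps)
qed

lemma recurrence_neg:
  fixes q :: "nat \<Rightarrow> real"
  assumes rec: "\<And>n. real (Suc n) * q (Suc n) = - (\<Sum>i\<le>n. q i / (real n - real i + 2))"
    and "q 0 > 0" and "n \<ge> 1"
  shows "q n < 0"
  using \<open>n \<ge> 1\<close>
proof (induction n rule: less_induct)
  case (less n)
  then obtain m where n: "n = Suc m"
    by (cases n) auto
  show ?case
  proof (cases "m = 0")
    case True
    then show ?thesis
      using rec[of 0] \<open>q 0 > 0\<close> n by simp
  next
    case False
    then have "m \<ge> 1"
      by simp
    have "(\<Sum>i<m. q i * (real i / ((real m + 2) * (real m - real i + 1) * (real m - real i + 2)))) \<le> 0"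
    proof (rule sum_nonpos)
      fix i
      assume "i \<in> {..<m}"
      then have "real i / ((real m + 2) * (real m - real i + 1) * (real m - real i + 2)) \<ge> 0"
        by simp
      moreover have "i = 0 \<or> q i < 0"
        using less.IH[of i] \<open>i \<in> {..<m}\<close> n by (cases "i = 0") simp_all
      ultimately show "q i * (real i / ((real m + 2) * (real m - real i + 1) * (real m - real i + 2))) \<le> 0"
        using mult_nonpos_nonneg[of "q i"] by fastforce
    qed
    moreover have "(real m + 1) * real m / (real m + 2) - 1 / 2 > 0"
    proof -
      have "real m + 2 < 2 * ((real m + 1) * real m)"
        using \<open>m \<ge> 1\<close> mult_mono[of 1 "real m" 1 "real m"] by (simp add: algebra_simps)
      then show ?thesis
        by (simp add: field_simps)
    qed
    moreover have "q m < 0"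
      using less.IH \<open>m \<ge> 1\<close> n by simp
    ultimately have "real (Suc m) * q (Suc m) < 0"
      unfolding recurrence_step_eq[OF rec \<open>m \<ge> 1\<close>] by (smt (verit) mult_pos_neg)
    then show ?thesis
      using n by (simp add: mult_less_0_iff)
  qed
qed

definition fps_B :: "real fps" where
  "fps_B = Abs_fps (\<lambda>m. 1 / (real m + 2))"

lemma one_minus_X_times_deriv_L_plus_B: "(1 - fps_X) * (fps_deriv fps_L + fps_B) = 1"
proof -
  have "fps_deriv fps_L + fps_B = Abs_fps (\<lambda>_. 1)"
  proof (rule fps_ext)
    fix n
    have "real (n + 1) * (1 / (real (n + 1) + 1)) + 1 / (real n + 2) = 1"
      by (simp add: field_simps)
    then show "fps_nth (fps_deriv fps_L + fps_B) n = fps_nth (Abs_fps (\<lambda>_. 1)) n"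
      by (simp add: fps_L_def fps_B_def)
  qed
  moreover have "(1 - fps_X) * Abs_fps (\<lambda>_. 1) = (1 :: real fps)"
    by (rule fps_ext) (simp add: algebra_simps)
  ultimately show ?thesis
    by simp
qed

lemma fps_deriv_one_minus_X_times_f:
  "fps_deriv ((1 - fps_X) * fps_f) = - ((1 - fps_X) * fps_f * fps_B)"
proof -
  have "fps_deriv ((1 - fps_X) * fps_f) = (1 - fps_X) * (fps_f * fps_deriv fps_L) - fps_f"
    by (simp add: fps_deriv_fps_f algebra_simps)
  also have "\<dots> = fps_f * ((1 - fps_X) * (fps_deriv fps_L + fps_B)) - (1 - fps_X) * fps_f * fps_B - fps_f"
    by (simp add: algebra_simps)
  finally show ?thesis
    by (simp add: one_minus_X_times_deriv_L_plus_B)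
qed

lemma fcoef_Suc_less: "fcoef (Suc n) < fcoef n"
proof -
  define Q where "Q = (1 - fps_X) * fps_f"
  have "real (Suc k) * fps_nth Q (Suc k) = - (\<Sum>i\<le>k. fps_nth Q i / (real k - real i + 2))" for k
  proof -
    have "fps_nth (fps_deriv Q) k = fps_nth (- (Q * fps_B)) k"
      unfolding Q_def by (simp only: fps_deriv_one_minus_X_times_f)
    then show ?thesis
      by (simp add: fps_mult_nth fps_B_def atLeast0AtMost of_nat_diff)
  qed
  moreover have "fps_nth Q 0 > 0"
    by (simp add: Q_def fps_f_def fcoef_0)
  ultimately have "fps_nth Q (Suc n) < 0"
    by (rule recurrence_neg) simp
  then show ?thesis
    by (simp add: Q_def fps_f_def algebra_simps)
qed

section \<open>Alternating series with strictly decreasing terms\<close>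

lemma alternating_sums_pos:
  fixes u :: "nat \<Rightarrow> real"
  assumes dec: "\<And>n. u (Suc n) < u n" and sums: "(\<lambda>n. (-1)^n * u n) sums s"
  shows "0 < s"
proof -
  have pairs: "(\<lambda>n. \<Sum>j\<in>{n * 2..<n * 2 + 2}. (-1)^j * u j) sums s"
    using sums by (rule sums_group) simp
  have "(\<Sum>j\<in>{n * 2..<n * 2 + 2}. (-1)^j * u j) = u (2 * n) - u (Suc (2 * n))" for n
    by (simp add: mult.commute)
  with pairs have "(\<lambda>n. u (2 * n) - u (Suc (2 * n))) sums s"
    by simp
  then show ?thesis
    using suminf_pos[of "\<lambda>n. u (2 * n) - u (Suc (2 * n))"] dec by (simp add: sums_iff)
qed

lemma alternating_partial_sums_less:
  fixes u :: "nat \<Rightarrow> real"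
  assumes dec: "\<And>n. u (Suc n) < u n"
  shows "(\<Sum>i<2 * k. (-1)^i * u i) < (\<Sum>i<2 * k + 2. (-1)^i * u i)"
    and "(\<Sum>i<2 * k + 3. (-1)^i * u i) < (\<Sum>i<2 * k + 1. (-1)^i * u i)"
  using dec[of "2 * k"] dec[of "2 * k + 1"] dec[of "2 * k + 2"]
  by (simp_all add: numeral_3_eq_3)

lemma alternating_partial_sums_bounds:
  fixes u :: "nat \<Rightarrow> real"
  assumes dec: "\<And>n. u (Suc n) < u n" and sums: "(\<lambda>n. (-1)^n * u n) sums s"
  shows "(\<Sum>i<2 * k. (-1)^i * u i) < s" and "s < (\<Sum>i<2 * k + 1. (-1)^i * u i)"
proof -
  have tail: "0 < (-1)^m * (s - (\<Sum>i<m. (-1)^i * u i))" for m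
  proof (rule alternating_sums_pos)
    show "u (Suc n + m) < u (n + m)" for n
      by (simp add: dec)
    have "(\<lambda>n. (-1)^m * ((-1)^(n + m) * u (n + m))) sums ((-1)^m * (s - (\<Sum>i<m. (-1)^i * u i)))"
      using sums_split_initial_segment[OF sums, of m] by (rule sums_mult)
    moreover have "(-1)^m * ((-1)^(n + m) * u (n + m)) = (-1)^n * u (n + m)" for n
    proof -
      have "(-1::real)^m * (-1)^m = 1"
        by (simp flip: power_mult_distrib)
      then show ?thesis
        by (simp add: power_add mult.left_commute[of "(-1::real)^m"])
    qed
    ultimately show "(\<lambda>n. (-1)^n * u (n + m)) sums ((-1)^m * (s - (\<Sum>i<m. (-1)^i * u i)))"
      by simp
  qed
  from tail[of "2 * k"] show "(\<Sum>i<2 * k. (-1)^i * u i) < s"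
    by simp
  from tail[of "2 * k + 1"] show "s < (\<Sum>i<2 * k + 1. (-1)^i * u i)"
    by simp
qed

section \<open>The partial sums \<open>e_n(x)\<close>\<close>

lemma epart_eq_sum: "epart n x = (\<Sum>k<Suc n. (-1)^k * (exp 1 * fcoef k * x^k))"
proof -
  have "1 + (\<Sum>k=1..n. (-1)^k * fcoef k * x^k) = (\<Sum>k<Suc n. (-1)^k * fcoef k * x^k)"
    by (simp add: lessThan_Suc_atMost atMost_atLeast0 sum.atLeast_Suc_atMost fcoef_0)
  then have "epart n x = exp 1 * (\<Sum>k<Suc n. (-1)^k * fcoef k * x^k)"
    by (simp only: epart_def)
  then show ?thesis
    by (simp add: sum_distrib_left mult_ac del: sum.lessThan_Suc)
qed

lemma efun_sums_fcoef:
  fixes x :: real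
  assumes "\<bar>x\<bar> < 1"
  shows "(\<lambda>k. (-1)^k * (exp 1 * fcoef k * x^k)) sums efun x"
proof -
  have "ecoef k = (-1)^k * fcoef k" for k
    by (simp add: fcoef_def flip: power_mult_distrib)
  then show ?thesis
    using efun_sums[OF assms] by (simp add: mult_ac)
qed

lemma epart_alternating:
  fixes x :: real
  assumes "0 < x" "x < 1"
  shows "epart (2*k+1) x < epart (2*k+3) x" "epart (2*k+1) x < efun x"
    and "epart (2*k+2) x < epart (2*k) x" "efun x < epart (2*k) x"
proof -
  define u where "u k = exp 1 * fcoef k * x^k" for k
  have dec: "u (Suc n) < u n" for n
  proof -
    have "fcoef (Suc n) * x < fcoef n"
      using fcoef_pos[of "Suc n"] fcoef_Suc_less[of n] assms
      by (smt (verit) mult_less_cancel_left1)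
    then show ?thesis
      using assms by (simp add: u_def mult_ac)
  qed
  have sums: "(\<lambda>n. (-1)^n * u n) sums efun x"
    using efun_sums_fcoef[of x] assms by (simp add: u_def)
  have epart: "epart n x = (\<Sum>i<Suc n. (-1)^i * u i)" for n
    by (simp add: epart_eq_sum u_def)
  have "Suc (2*k+1) = 2 * Suc k" "Suc (2*k+3) = 2 * Suc k + 2" "Suc (2*k+2) = 2 * k + 3" "Suc (2*k) = 2 * k + 1"
    by simp_all
  then show "epart (2*k+1) x < epart (2*k+3) x" "epart (2*k+1) x < efun x"
    and "epart (2*k+2) x < epart (2*k) x" "efun x < epart (2*k) x"
    unfolding epart
    by (simp_all only: alternating_partial_sums_less[of u, OF dec]
        alternating_partial_sums_bounds[of u, OF dec sums])
qed

lemma epart_strict_mono_neg: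
  fixes x :: real
  assumes "-1 < x" "x < 0"
  shows "epart n x < epart (Suc n) x" "epart n x < efun x"
proof -
  define a where "a = (\<lambda>k. (-1)^k * (exp 1 * fcoef k * x^k))"
  have pos: "a k > 0" for k
  proof -
    have "a k = exp 1 * fcoef k * (-x)^k"
      by (simp add: a_def power_minus[of x] mult_ac)
    then show ?thesis
      using fcoef_pos[of k] assms by simp
  qed
  have epart: "epart n x = (\<Sum>k<Suc n. a k)" for n
    by (simp add: epart_eq_sum a_def)
  show "epart n x < epart (Suc n) x"
    unfolding epart using pos[of "Suc n"] by simp
  have "a sums efun x"
    using efun_sums_fcoef[of x] assms by (simp add: a_def)
  then show "epart n x < efun x"
    unfolding epart using pos by (metis sums_iff sum_less_suminf)
qed

theorem mainTheorem3:
  shows "(\<forall>x::real. 0 < x \<and> x < 1 \<longrightarrow>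
            (\<forall>k::nat. epart (2*k+1) x < epart (2*k+3) x) \<and>
            (\<forall>k::nat. epart (2*k+1) x < efun x) \<and>
            (\<forall>k::nat. epart (2*k+2) x < epart (2*k) x) \<and>
            (\<forall>k::nat. efun x < epart (2*k) x))
       \<and> (\<forall>x::real. -1 < x \<and> x < 0 \<longrightarrow>
            (\<forall>n::nat. epart n x < epart (Suc n) x \<and> epart n x < efun x))
       \<and> (\<forall>n::nat. epart n 0 = efun 0 \<and> efun 0 = exp 1)"
proof -
  have "epart n 0 = exp 1" for n
    by (simp add: epart_def)
  then show ?thesis
    using epart_alternating epart_strict_mono_neg by (simp add: efun_def)
qed

end
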